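(* Let $\Pi$ be an $n$-dimensional linear space satisfying the exchange axiom and let $S$ and $U$ be distinct subspaces of $\Pi$. The following are equivalent: (1) there exists a base of $\Pi$ such that both $S$ and $U$ are spanned by points of this base; (2) $\dim\overline{S\cup U}=\dim S+\dim U-\dim(S\cap U)$.
   Context: A linear space $\Pi=(P,\mathcal{L})$ is a set $P$ of points with a family $\mathcal{L}$ of proper subsets (lines) such that each line has at least two points and any two distinct points $p,q$ lie on exactly one line $pq$. A subspace is a set $S\subset P$ with $pq\subset S$ for all distinct $p,q\in S$; $\overline{X}$ is the smallest subspace containing $X$. A set $X$ is independent if $\overline{X}$ is not spanned by a proper subset of $X$; a base of $\Pi$ is an independent set spanning $P$. A subspace is $m$-dimensional if $m+1$ is the smallest number of points spanning it (the empty set is $(-1)$-dimensional). Exchange axiom: for every $X\subset P$ and $p_1,p_2\in P\setminus\overline{X}$, $p_2\in\overline{X\cup\{p_1\}}$ implies $p_1\in\overline{X\cup\{p_2\}}$. *)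

theory Defs
  imports Main
begin

definition linear_space :: "'a set \<Rightarrow> 'a set set \<Rightarrow> bool" where
  "linear_space P L \<longleftrightarrow>
     (\<forall>l\<in>L. l \<subset> P \<and> (\<exists>p q. p \<in> l \<and> q \<in> l \<and> p \<noteq> q)) \<and>
     (\<forall>p\<in>P. \<forall>q\<in>P. p \<noteq> q \<longrightarrow> (\<exists>!l. l \<in> L \<and> p \<in> l \<and> q \<in> l))"

definition line_through :: "'a set set \<Rightarrow> 'a \<Rightarrow> 'a \<Rightarrow> 'a set" where
  "line_through L p q = (THE l. l \<in> L \<and> p \<in> l \<and> q \<in> l)"

definition subspace :: "'a set \<Rightarrow> 'a set set \<Rightarrow> 'a set \<Rightarrow> bool" where
  "subspace P L S \<longleftrightarrow> S \<subseteq> P \<and>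
     (\<forall>p\<in>S. \<forall>q\<in>S. p \<noteq> q \<longrightarrow> line_through L p q \<subseteq> S)"

definition span :: "'a set \<Rightarrow> 'a set set \<Rightarrow> 'a set \<Rightarrow> 'a set" where
  "span P L X = \<Inter> {S. subspace P L S \<and> X \<subseteq> S}"

definition independent :: "'a set \<Rightarrow> 'a set set \<Rightarrow> 'a set \<Rightarrow> bool" where
  "independent P L X \<longleftrightarrow> X \<subseteq> P \<and> (\<forall>Y. Y \<subset> X \<longrightarrow> span P L Y \<noteq> span P L X)"

definition base :: "'a set \<Rightarrow> 'a set set \<Rightarrow> 'a set \<Rightarrow> bool" where
  "base P L B \<longleftrightarrow> independent P L B \<and> span P L B = P"

definition finitely_spanned :: "'a set \<Rightarrow> 'a set set \<Rightarrow> 'a set \<Rightarrow> bool" where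
  "finitely_spanned P L S \<longleftrightarrow> (\<exists>X. X \<subseteq> P \<and> finite X \<and> span P L X = S)"

definition dim :: "'a set \<Rightarrow> 'a set set \<Rightarrow> 'a set \<Rightarrow> int" where
  "dim P L S = int (LEAST k. \<exists>X. X \<subseteq> P \<and> finite X \<and> card X = k \<and> span P L X = S) - 1"

definition exchange_axiom :: "'a set \<Rightarrow> 'a set set \<Rightarrow> bool" where
  "exchange_axiom P L \<longleftrightarrow>
     (\<forall>X p1 p2. X \<subseteq> P \<longrightarrow> p1 \<in> P - span P L X \<longrightarrow> p2 \<in> P - span P L X \<longrightarrow>
        p2 \<in> span P L (insert p1 X) \<longrightarrow> p1 \<in> span P L (insert p2 X))"

end

theory Submission
  imports Defs
begin


lemma span_superset: "X \<subseteq> span P L X"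
  unfolding span_def by blast

lemma span_mono: "X \<subseteq> Y \<Longrightarrow> span P L X \<subseteq> span P L Y"
  unfolding span_def by blast

lemma span_least: "subspace P L T \<Longrightarrow> X \<subseteq> T \<Longrightarrow> span P L X \<subseteq> T"
  unfolding span_def by blast

lemma subspace_Int: "subspace P L S \<Longrightarrow> subspace P L U \<Longrightarrow> subspace P L (S \<inter> U)"
  unfolding subspace_def by blast

lemma subspace_points:
  assumes "linear_space P L"
  shows "subspace P L P"
  unfolding subspace_def
proof (intro conjI ballI impI subset_refl)
  have lines: "\<forall>l\<in>L. l \<subset> P \<and> (\<exists>p q. p \<in> l \<and> q \<in> l \<and> p \<noteq> q)"
    and unique: "\<forall>p\<in>P. \<forall>q\<in>P. p \<noteq> q \<longrightarrow> (\<exists>!l. l \<in> L \<and> p \<in> l \<and> q \<in> l)"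
    using assms unfolding linear_space_def by (fact conjunct1, fact conjunct2)
  fix p q assume "p \<in> P" "q \<in> P" "p \<noteq> q"
  then have "\<exists>!l. l \<in> L \<and> p \<in> l \<and> q \<in> l"
    using unique by simp
  then have "line_through L p q \<in> L \<and> p \<in> line_through L p q \<and> q \<in> line_through L p q"
    unfolding line_through_def by (rule theI')
  then show "line_through L p q \<subseteq> P"
    using lines by blast
qed

lemma subspace_span:
  assumes "linear_space P L" "X \<subseteq> P"
  shows "subspace P L (span P L X)"
  unfolding subspace_def
proof (intro conjI ballI impI)
  show "span P L X \<subseteq> P"
    using span_least[OF subspace_points[OF assms(1)] assms(2)] .
  fix p q assume pq: "p \<in> span P L X" "q \<in> span P L X" "p \<noteq> q"
  have "line_through L p q \<subseteq> T" if T: "subspace P L T" "X \<subseteq> T" for T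
  proof -
    have "p \<in> T" "q \<in> T" using pq span_least[OF T] by auto
    then show ?thesis using T(1) pq(3) unfolding subspace_def by blast
  qed
  then show "line_through L p q \<subseteq> span P L X"
    unfolding span_def by blast
qed

lemma span_subset_span:
  "linear_space P L \<Longrightarrow> X \<subseteq> P \<Longrightarrow> A \<subseteq> span P L X \<Longrightarrow> span P L A \<subseteq> span P L X"
  by (meson span_least subspace_span)

lemma span_Un_span:
  assumes "linear_space P L" "A \<subseteq> P" "B \<subseteq> P"
  shows "span P L (span P L A \<union> span P L B) = span P L (A \<union> B)"
proof
  show "span P L (A \<union> B) \<subseteq> span P L (span P L A \<union> span P L B)"
    by (rule span_mono) (use span_superset[of A P L] span_superset[of B P L] in blast)
  show "span P L (span P L A \<union> span P L B) \<subseteq> span P L (A \<union> B)"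
  proof (rule span_subset_span)
    have "span P L A \<subseteq> span P L (A \<union> B)" "span P L B \<subseteq> span P L (A \<union> B)"
      by (simp_all add: span_mono)
    then show "span P L A \<union> span P L B \<subseteq> span P L (A \<union> B)" by (rule Un_least)
  qed (use assms in auto)
qed

lemma dim_span_le_card:
  assumes "finite X" "X \<subseteq> P"
  shows "dim P L (span P L X) \<le> int (card X) - 1"
proof -
  have "(LEAST k. \<exists>Y. Y \<subseteq> P \<and> finite Y \<and> card Y = k \<and> span P L Y = span P L X) \<le> card X"
    using assms by (intro Least_le) blast
  then show ?thesis unfolding dim_def by simp
qed

lemma independent_iff_not_in_span_remove:
  assumes "linear_space P L"
  shows "independent P L I \<longleftrightarrow> I \<subseteq> P \<and> (\<forall>x\<in>I. x \<notin> span P L (I - {x}))"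
proof
  assume ind: "independent P L I"
  then have IP: "I \<subseteq> P" and minimal: "\<And>Y. Y \<subset> I \<Longrightarrow> span P L Y \<noteq> span P L I"
    unfolding independent_def by auto
  have "x \<notin> span P L (I - {x})" if "x \<in> I" for x
  proof
    assume "x \<in> span P L (I - {x})"
    then have "I \<subseteq> span P L (I - {x})"
      using span_superset[of "I - {x}" P L] by blast
    then have "span P L I \<subseteq> span P L (I - {x})"
      using IP by (intro span_subset_span[OF assms]) auto
    moreover have "span P L (I - {x}) \<subseteq> span P L I"
      by (intro span_mono) blast
    ultimately have "span P L (I - {x}) = span P L I" by (rule subset_antisym[rotated])
    moreover have "I - {x} \<subset> I" using that by blast
    ultimately show False using minimal by blast
  qed
  with IP show "I \<subseteq> P \<and> (\<forall>x\<in>I. x \<notin> span P L (I - {x}))" by blast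
next
  assume pointwise: "I \<subseteq> P \<and> (\<forall>x\<in>I. x \<notin> span P L (I - {x}))"
  show "independent P L I"
    unfolding independent_def
  proof (intro conjI allI impI notI)
    fix Y assume Y: "Y \<subset> I" "span P L Y = span P L I"
    obtain x where x: "x \<in> I" "x \<notin> Y" using Y(1) by blast
    have "x \<in> span P L Y" using x Y(2) span_superset[of I P L] by blast
    also have "\<dots> \<subseteq> span P L (I - {x})" using Y(1) x by (intro span_mono) blast
    finally show False using pointwise x by blast
  qed (use pointwise in blast)
qed

lemma independent_subset_points: "independent P L I \<Longrightarrow> I \<subseteq> P"
  unfolding independent_def by (rule conjunct1)

lemma independent_not_in_span_remove:
  "linear_space P L \<Longrightarrow> independent P L I \<Longrightarrow> x \<in> I \<Longrightarrow> x \<notin> span P L (I - {x})"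
  using independent_iff_not_in_span_remove by blast

lemma independent_subset:
  assumes "linear_space P L" "independent P L I" "J \<subseteq> I"
  shows "independent P L J"
proof -
  have "I \<subseteq> P" and "\<And>x. x \<in> I \<Longrightarrow> x \<notin> span P L (I - {x})"
    using assms(2) unfolding independent_iff_not_in_span_remove[OF assms(1)] by auto
  moreover have "span P L (J - {x}) \<subseteq> span P L (I - {x})" for x
    using assms(3) by (intro span_mono) blast
  ultimately show ?thesis
    using assms(3) unfolding independent_iff_not_in_span_remove[OF assms(1)] by blast
qed

lemma independent_if_card_eq_dim:
  assumes "finite W" "W \<subseteq> P" "dim P L (span P L W) = int (card W) - 1"
  shows "independent P L W"
  unfolding independent_def
proof (intro conjI allI impI)
  fix Y assume "Y \<subset> W"
  then have "card Y < card W" "finite Y" "Y \<subseteq> P"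
    using assms(1,2) by (auto intro: psubset_card_mono finite_subset)
  then show "span P L Y \<noteq> span P L W"
    using dim_span_le_card[of Y P L] assms(3) by auto
qed (use assms(2) in blast)

locale exchange_space =
  fixes P :: "'a set" and L :: "'a set set"
  assumes linear_space: "linear_space P L" and exchange: "exchange_axiom P L"
begin

lemma independent_insert:
  assumes I: "independent P L I" and s: "s \<in> P" "s \<notin> span P L I"
  shows "independent P L (insert s I)"
proof -
  have IP: "I \<subseteq> P" and not_in_span_rest: "\<And>x. x \<in> I \<Longrightarrow> x \<notin> span P L (I - {x})"
    using I unfolding independent_iff_not_in_span_remove[OF linear_space] by auto
  have "x \<notin> span P L (insert s (I - {x}))" if x: "x \<in> I" "x \<noteq> s" for x
  proof
    assume "x \<in> span P L (insert s (I - {x}))"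
    moreover have "s \<notin> span P L (I - {x})"
      using s span_mono[of "I - {x}" I P L] by blast
    ultimately have "s \<in> span P L (insert x (I - {x}))"
      using exchange x IP s not_in_span_rest unfolding exchange_axiom_def by blast
    then show False using s x by (simp add: insert_absorb)
  qed
  moreover have "s \<notin> span P L (I - {s})"
    using s span_mono[of "I - {s}" I P L] by blast
  ultimately show ?thesis
    unfolding independent_iff_not_in_span_remove[OF linear_space]
    using IP s by (auto simp: insert_Diff_if)
qed

lemma obtain_exchange_point:
  assumes X: "X \<subseteq> P" and I: "independent P L I" "I \<subseteq> span P L X" and i: "i \<in> I"
  obtains x where "x \<in> X" "x \<notin> I - {i}" "independent P L (insert x (I - {i}))"
proof -
  have IP: "I \<subseteq> P" and i_indep: "i \<notin> span P L (I - {i})"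
    using I(1) i unfolding independent_iff_not_in_span_remove[OF linear_space] by auto
  have "\<not> X \<subseteq> span P L (I - {i})"
  proof
    assume "X \<subseteq> span P L (I - {i})"
    then have "span P L X \<subseteq> span P L (I - {i})"
      using IP by (intro span_subset_span[OF linear_space]) auto
    then show False using i_indep i I(2) by blast
  qed
  then obtain x where x: "x \<in> X" "x \<notin> span P L (I - {i})" by blast
  have "x \<notin> I - {i}" using x span_superset[of "I - {i}" P L] by blast
  moreover have "independent P L (insert x (I - {i}))"
    using x X by (intro independent_insert independent_subset[OF linear_space I(1)]) auto
  ultimately show ?thesis by (rule that[OF x(1)])
qed

text \<open>Steinitz exchange: trade the points of I - X one at a time for points of X.\<close>
lemma card_le_if_independent_subset_span:
  assumes X: "finite X" "X \<subseteq> P"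
    and I: "finite I" "independent P L I" "I \<subseteq> span P L X"
  shows "card I \<le> card X"
  using I
proof (induction "card (I - X)" arbitrary: I rule: less_induct)
  case (less I)
  show ?case
  proof (cases "I \<subseteq> X")
    case True
    then show ?thesis using X(1) by (simp add: card_mono)
  next
    case False
    then obtain i where i: "i \<in> I" "i \<notin> X" by blast
    obtain x where x: "x \<in> X" "x \<notin> I - {i}" and I': "independent P L (insert x (I - {i}))"
      by (rule obtain_exchange_point[OF X(2) less.prems(2,3) i(1)])
    have "card (insert x (I - {i}) - X) < card (I - X)"
    proof -
      have "insert x (I - {i}) - X = (I - X) - {i}" using x i by blast
      moreover have "card ((I - X) - {i}) < card (I - X)"
        using less.prems(1) i by (intro card_Diff1_less) auto
      ultimately show ?thesis by simp
    qed
    moreover have "insert x (I - {i}) \<subseteq> span P L X"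
      using less.prems(3) x span_superset[of X P L] by blast
    ultimately have "card (insert x (I - {i})) \<le> card X"
      using less.hyps less.prems(1) I' by blast
    moreover have "card (insert x (I - {i})) = card I"
      using x(2) less.prems(1) card_Suc_Diff1[OF less.prems(1) i(1)] by simp
    ultimately show ?thesis by simp
  qed
qed

lemma finite_independent_subset_span:
  assumes X: "finite X" "X \<subseteq> P" and I: "independent P L I" "I \<subseteq> span P L X"
  shows "finite I"
proof (rule ccontr)
  assume "infinite I"
  then obtain F where F: "F \<subseteq> I" "finite F" "card F = Suc (card X)"
    using infinite_arbitrarily_large by blast
  have "independent P L F" using independent_subset[OF linear_space I(1) F(1)] .
  then have "card F \<le> card X"
    using F I X by (intro card_le_if_independent_subset_span) auto
  then show False using F(3) by simp
qed

lemma dim_span_finite_independent: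
  assumes "finite I" "independent P L I"
  shows "dim P L (span P L I) = int (card I) - 1"
proof -
  have IP: "I \<subseteq> P" using assms(2) unfolding independent_def by blast
  have "(LEAST k. \<exists>X. X \<subseteq> P \<and> finite X \<and> card X = k \<and> span P L X = span P L I) = card I"
  proof (rule Least_equality)
    fix k assume "\<exists>X. X \<subseteq> P \<and> finite X \<and> card X = k \<and> span P L X = span P L I"
    then obtain X where "X \<subseteq> P" "finite X" "card X = k" "span P L X = span P L I" by blast
    then show "card I \<le> k"
      using assms span_superset[of I P L] by (metis card_le_if_independent_subset_span)
  qed (use IP assms(1) in blast)
  then show ?thesis unfolding dim_def by simp
qed

end

locale finite_exchange_space = exchange_space +
  assumes finitely_spanned: "finitely_spanned P L P"
begin

lemma independent_finite_card_bounded: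
  obtains N where "\<And>I. independent P L I \<Longrightarrow> finite I \<and> card I \<le> N"
proof -
  obtain X where X: "X \<subseteq> P" "finite X" "span P L X = P"
    using finitely_spanned unfolding finitely_spanned_def by blast
  have "finite I \<and> card I \<le> card X" if I: "independent P L I" for I
  proof -
    have "I \<subseteq> span P L X" using independent_subset_points[OF I] X(3) by simp
    then have "finite I" using finite_independent_subset_span[OF X(2,1) I] by simp
    with \<open>I \<subseteq> span P L X\<close> show ?thesis
      using card_le_if_independent_subset_span[OF X(2,1) _ I] by simp
  qed
  then show ?thesis using that by blast
qed

lemma independent_finite:
  assumes "independent P L I"
  shows "finite I"
proof -
  obtain N where "\<And>I. independent P L I \<Longrightarrow> finite I \<and> card I \<le> N"
    using independent_finite_card_bounded by blast
  then show ?thesis using assms by blast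
qed

text \<open>A largest independent subset of T containing J spans T, by the exchange axiom.\<close>
lemma independent_extend_to_base_of_subspace:
  assumes T: "subspace P L T" and J: "independent P L J" "J \<subseteq> T"
  obtains I where "independent P L I" "J \<subseteq> I" "I \<subseteq> T" "span P L I = T"
proof -
  let ?Q = "\<lambda>K. independent P L K \<and> J \<subseteq> K \<and> K \<subseteq> T"
  obtain N where N: "\<And>K. independent P L K \<Longrightarrow> finite K \<and> card K \<le> N"
    using independent_finite_card_bounded by blast
  have "?Q J" using J by simp
  moreover have "\<forall>K. ?Q K \<longrightarrow> card K < Suc N" using N by (simp add: le_imp_less_Suc)
  ultimately obtain I where I: "independent P L I" "J \<subseteq> I" "I \<subseteq> T"
    and I_max: "\<And>K. ?Q K \<Longrightarrow> card K \<le> card I"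
    using ex_has_greatest_nat[of ?Q J card "Suc N"] by blast
  have "s \<in> span P L I" if s: "s \<in> T" for s
  proof (rule ccontr)
    assume s_new: "s \<notin> span P L I"
    have "s \<in> P" using T s unfolding subspace_def by blast
    then have "?Q (insert s I)" using independent_insert[OF I(1) _ s_new] I(2,3) s by blast
    then have "card (insert s I) \<le> card I" by (rule I_max)
    moreover have "s \<notin> I" using s_new span_superset[of I P L] by blast
    ultimately show False using independent_finite[OF I(1)] by simp
  qed
  then have "span P L I = T" using span_least[OF T I(3)] by blast
  then show ?thesis by (rule that[OF I])
qed

lemma dim_span_independent: "independent P L I \<Longrightarrow> dim P L (span P L I) = int (card I) - 1"
  by (simp add: dim_span_finite_independent independent_finite)

lemma card_independent_le_dim:
  assumes T: "subspace P L T" and I: "independent P L I" "I \<subseteq> T"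
  shows "int (card I) - 1 \<le> dim P L T"
proof -
  obtain J where J: "independent P L J" "I \<subseteq> J" "J \<subseteq> T" "span P L J = T"
    by (rule independent_extend_to_base_of_subspace[OF T I])
  then have "card I \<le> card J" using independent_finite[OF J(1)] by (simp add: card_mono)
  then show ?thesis using dim_span_independent[OF J(1)] unfolding J(4) by simp
qed

lemma obtain_bases_through_base_of_Int:
  assumes S: "subspace P L S" and U: "subspace P L U"
  obtains X Y where "independent P L X" "independent P L Y"
    "span P L X = S" "span P L Y = U" "span P L (X \<inter> Y) = S \<inter> U"
proof -
  have "independent P L {}" unfolding independent_def by blast
  then obtain Z where Z: "independent P L Z" "{} \<subseteq> Z" "Z \<subseteq> S \<inter> U" "span P L Z = S \<inter> U"
    by (rule independent_extend_to_base_of_subspace[OF subspace_Int[OF S U] _ empty_subsetI])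
  obtain X where X: "independent P L X" "Z \<subseteq> X" "X \<subseteq> S" "span P L X = S"
    using Z(3) by (rule independent_extend_to_base_of_subspace[OF S Z(1) le_infE])
  obtain Y where Y: "independent P L Y" "Z \<subseteq> Y" "Y \<subseteq> U" "span P L Y = U"
    using Z(3) by (rule independent_extend_to_base_of_subspace[OF U Z(1) le_infE])
  have "w \<in> Z" if w: "w \<in> X" "w \<in> Y" for w
  proof (rule ccontr)
    assume "w \<notin> Z"
    then have "span P L Z \<subseteq> span P L (X - {w})" using X(2) by (intro span_mono) blast
    moreover have "w \<in> span P L Z" using w X(3) Y(3) unfolding Z(4) by blast
    ultimately show False using independent_not_in_span_remove[OF linear_space X(1) w(1)] by blast
  qed
  then have "X \<inter> Y = Z" using X(2) Y(2) by blast
  then show ?thesis using that[OF X(1) Y(1) X(4) Y(4)] Z(4) by simp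
qed

text \<open>W is the union of bases of S and U that meet in a base of S \<inter> U.\<close>
lemma obtain_spanning_set_of_join:
  assumes S: "subspace P L S" and U: "subspace P L U"
  obtains W where "finite W" "W \<subseteq> P" "span P L W = span P L (S \<union> U)"
    "int (card W) - 1 = dim P L S + dim P L U - dim P L (S \<inter> U)"
    "\<exists>X\<subseteq>W. span P L X = S" "\<exists>Y\<subseteq>W. span P L Y = U"
proof -
  obtain X Y where X: "independent P L X" and Y: "independent P L Y"
    and spans: "span P L X = S" "span P L Y = U" "span P L (X \<inter> Y) = S \<inter> U"
    by (rule obtain_bases_through_base_of_Int[OF S U])
  have fin: "finite X" "finite Y" using independent_finite X Y by blast+
  have XP: "X \<subseteq> P" and YP: "Y \<subseteq> P" using independent_subset_points X Y by blast+
  have XiY: "independent P L (X \<inter> Y)" using independent_subset[OF linear_space X Int_lower1] .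
  have "dim P L (S \<inter> U) = int (card (X \<inter> Y)) - 1"
    using dim_span_independent[OF XiY] unfolding spans(3) .
  moreover have "card (X \<union> Y) + card (X \<inter> Y) = card X + card Y"
    using card_Un_Int[OF fin] by simp
  ultimately have "int (card (X \<union> Y)) - 1 = dim P L S + dim P L U - dim P L (S \<inter> U)"
    using dim_span_independent[OF X] dim_span_independent[OF Y] unfolding spans(1,2)
    by linarith
  moreover have "span P L (X \<union> Y) = span P L (S \<union> U)"
    using span_Un_span[OF linear_space XP YP] unfolding spans(1,2) by simp
  moreover have "\<exists>X'\<subseteq>X \<union> Y. span P L X' = S" "\<exists>Y'\<subseteq>X \<union> Y. span P L Y' = U"
    using spans(1,2) by blast+
  moreover have "finite (X \<union> Y)" "X \<union> Y \<subseteq> P" using fin XP YP by simp_all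
  ultimately show ?thesis using that[of "X \<union> Y"] by simp
qed

lemma dim_span_Un_add_dim_Int_le:
  assumes "subspace P L S" "subspace P L U"
  shows "dim P L (span P L (S \<union> U)) + dim P L (S \<inter> U) \<le> dim P L S + dim P L U"
proof -
  obtain W where W: "finite W" "W \<subseteq> P" "span P L W = span P L (S \<union> U)"
    and card_W: "int (card W) - 1 = dim P L S + dim P L U - dim P L (S \<inter> U)"
    by (rule obtain_spanning_set_of_join[OF assms])
  show ?thesis using dim_span_le_card[OF W(1,2), of L, unfolded W(3)] card_W by linarith
qed

lemma dim_span_Un_add_dim_Int_eq_if_common_base:
  assumes B: "independent P L B" and XY: "X \<subseteq> B" "Y \<subseteq> B"
  shows "dim P L (span P L (span P L X \<union> span P L Y)) + dim P L (span P L X \<inter> span P L Y)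
    = dim P L (span P L X) + dim P L (span P L Y)"
proof -
  have X: "independent P L X" and Y: "independent P L Y" and XuY: "independent P L (X \<union> Y)"
    using independent_subset[OF linear_space B] XY by simp_all
  have XiY: "independent P L (X \<inter> Y)" using independent_subset[OF linear_space X Int_lower1] .
  have fin: "finite X" "finite Y" using independent_finite X Y by blast+
  have XP: "X \<subseteq> P" and YP: "Y \<subseteq> P" using independent_subset_points X Y by blast+
  have S: "subspace P L (span P L X)" and U: "subspace P L (span P L Y)"
    using subspace_span[OF linear_space XP] subspace_span[OF linear_space YP] .
  have "X \<inter> Y \<subseteq> span P L X \<inter> span P L Y"
    using span_superset[of X P L] span_superset[of Y P L] by blast
  then have "int (card (X \<inter> Y)) - 1 \<le> dim P L (span P L X \<inter> span P L Y)"
    by (rule card_independent_le_dim[OF subspace_Int[OF S U] XiY])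
  moreover have "dim P L (span P L (span P L X \<union> span P L Y)) = int (card (X \<union> Y)) - 1"
    using dim_span_independent[OF XuY] unfolding span_Un_span[OF linear_space XP YP] .
  moreover have "card (X \<union> Y) + card (X \<inter> Y) = card X + card Y"
    using card_Un_Int[OF fin] by simp
  ultimately show ?thesis
    using dim_span_Un_add_dim_Int_le[OF S U] dim_span_independent[OF X] dim_span_independent[OF Y]
    by linarith
qed

lemma common_base_if_dim_span_Un_add_dim_Int_eq:
  assumes S: "subspace P L S" and U: "subspace P L U"
    and modular: "dim P L (span P L (S \<union> U)) + dim P L (S \<inter> U) = dim P L S + dim P L U"
  obtains B where "base P L B" "\<exists>X\<subseteq>B. span P L X = S" "\<exists>Y\<subseteq>B. span P L Y = U"
proof -
  obtain W where W: "finite W" "W \<subseteq> P" "span P L W = span P L (S \<union> U)"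
    "int (card W) - 1 = dim P L S + dim P L U - dim P L (S \<inter> U)"
    and XY: "\<exists>X\<subseteq>W. span P L X = S" "\<exists>Y\<subseteq>W. span P L Y = U"
    by (rule obtain_spanning_set_of_join[OF S U])
  have "dim P L (span P L W) = int (card W) - 1" using W(3,4) modular by simp
  then have "independent P L W" using independent_if_card_eq_dim[OF W(1,2)] by simp
  then obtain B where B: "independent P L B" "W \<subseteq> B" "B \<subseteq> P" "span P L B = P"
    by (rule independent_extend_to_base_of_subspace[OF subspace_points[OF linear_space] _ W(2)])
  have "base P L B" unfolding base_def using B(1,4) by simp
  moreover have "\<exists>X\<subseteq>B. span P L X = S" "\<exists>Y\<subseteq>B. span P L Y = U"
    using XY B(2) by blast+
  ultimately show ?thesis by (rule that)
qed

end

theorem proposition2p3: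
  fixes P :: "'a set" and L :: "'a set set" and n :: nat and S U :: "'a set"
  assumes "linear_space P L"
    and "exchange_axiom P L"
    and "finitely_spanned P L P" and "dim P L P = int n"
    and "subspace P L S" and "subspace P L U" and "S \<noteq> U"
  shows "(\<exists>B. base P L B \<and> (\<exists>X\<subseteq>B. span P L X = S) \<and> (\<exists>Y\<subseteq>B. span P L Y = U))
     \<longleftrightarrow> dim P L (span P L (S \<union> U)) = dim P L S + dim P L U - dim P L (S \<inter> U)"
proof -
  interpret finite_exchange_space P L
    using assms(1-3) by unfold_locales
  show ?thesis
  proof
    assume "\<exists>B. base P L B \<and> (\<exists>X\<subseteq>B. span P L X = S) \<and> (\<exists>Y\<subseteq>B. span P L Y = U)"
    then obtain B X Y where B: "independent P L B" "X \<subseteq> B" "Y \<subseteq> B"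
      and X: "span P L X = S" and Y: "span P L Y = U"
      unfolding base_def by blast
    have "dim P L (span P L (S \<union> U)) + dim P L (S \<inter> U) = dim P L S + dim P L U"
      using dim_span_Un_add_dim_Int_eq_if_common_base[OF B] unfolding X Y .
    then show "dim P L (span P L (S \<union> U)) = dim P L S + dim P L U - dim P L (S \<inter> U)"
      by linarith
  next
    assume "dim P L (span P L (S \<union> U)) = dim P L S + dim P L U - dim P L (S \<inter> U)"
    then have "dim P L (span P L (S \<union> U)) + dim P L (S \<inter> U) = dim P L S + dim P L U"
      by linarith
    then obtain B where "base P L B" "\<exists>X\<subseteq>B. span P L X = S" "\<exists>Y\<subseteq>B. span P L Y = U"
      by (rule common_base_if_dim_span_Un_add_dim_Int_eq[OF assms(5,6)])
    then show "\<exists>B. base P L B \<and> (\<exists>X\<subseteq>B. span P L X = S) \<and> (\<exists>Y\<subseteq>B. span P L Y = U)"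
      by blast
  qed
qed

end
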